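(* Let $i\ge 3$ and $k\ge 3$ be integers. Then: (a) $g_2(F_i,F_{i+2},F_{i+k})=(3F_i-1)F_{i+2}-F_i$ whenever $k\ge i+3$; (b) $g_2(F_i,F_{i+2},F_{2i+2})=(F_{i-2}-1)F_{i+2}+F_{2i+2}-F_i$ if $i$ is odd, and $g_2(F_i,F_{i+2},F_{2i+2})=(F_{i+2}-1)F_{i+2}-F_i$ if $i$ is even; (c) $g_2(F_i,F_{i+2},F_{2i+1})=(F_i-1)F_{i+2}+F_{2i+1}-F_i$; (d) $g_2(F_i,F_{i+2},F_{2i})=(2F_i-1)F_{i+2}-F_i$; (e) $g_2(F_i,F_{i+2},F_{2i-1})=(F_{i-4}-1)F_{i+2}+3F_{2i-1}-F_i$ for $i\ge 5$, and $g_2(F_4,F_6,F_7)=F_6+2F_7-F_4=31$; (f) if $r=\lfloor (F_i-1)/F_k\rfloor\ge 2$ (equivalently $k\le i-2$), then $$g_2(F_i,F_{i+2},F_{i+k})=\begin{cases}(F_i-rF_k-1)F_{i+2}+(r+2)F_{i+k}-F_i & \text{if } (F_i-rF_k)F_{i+2}\ge F_{k-2}F_i,\\ (F_k-1)F_{i+2}+(r+1)F_{i+k}-F_i & \text{if } (F_i-rF_k)F_{i+2}< F_{k-2}F_i.\end{cases}$$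
   Context: Fibonacci numbers: $F_0=0$, $F_1=1$, $F_n=F_{n-1}+F_{n-2}$. For positive integers $a_1,\dots,a_l$ with $\gcd(a_1,\dots,a_l)=1$ and an integer $n$, let $d(n;a_1,\dots,a_l)$ be the number of tuples $(x_1,\dots,x_l)$ of nonnegative integers with $a_1x_1+\dots+a_lx_l=n$. For a nonnegative integer $p$, the $p$-Frobenius number $g_p(a_1,\dots,a_l)$ is the largest integer $n$ with $d(n;a_1,\dots,a_l)\le p$. *)

theory Defs
  imports "HOL-Number_Theory.Fib"
begin

definition F :: "nat \<Rightarrow> int" where
  "F n = int (fib n)"

definition num_reps :: "int \<Rightarrow> int list \<Rightarrow> nat" where
  "num_reps n as = card {xs :: nat list. length xs = length as \<and>
      (\<Sum>j<length as. as ! j * int (xs ! j)) = n}"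

definition p_frobenius :: "nat \<Rightarrow> int list \<Rightarrow> int" where
  "p_frobenius p as = (GREATEST n :: int. num_reps n as \<le> p)"

end

theory Submission
  imports Defs "HOL-Number_Theory.Cong"
begin

(* Let gcd(a, b) = 1 and c \<equiv> e b (mod a).  A representation n = a x + b y + c z is determined
   by (y, z), and a pair (y, z) of nonnegative integers comes from a representation of n exactly
   when y + z e \<equiv> t (mod a), where t b \<equiv> n (mod a), and its weight b y + c z is at most n.
   Hence g_2(a, b, c) = M - a as soon as every residue class t contains three pairs of weight
   at most M, while the class of M - a contains at most two pairs of weight at most M - a.
   For the Fibonacci triples F_(i+k) = F_k F_(i+2) - F_(k-2) F_i gives e = F_k, and in every
   case of the theorem these pairs can be listed explicitly: writing t = y + z e, they arise by
   trading multiples of e between y and z, starting from t or from t + a. *)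

section \<open>Counting representations by residue classes\<close>

lemma cong_of_eq_add_mult:
  fixes x y j a :: int
  shows "x = y + j * a \<Longrightarrow> [x = y] (mod a)"
  by (simp add: cong_iff_dvd_diff)

lemma cong_int_eqE:
  fixes x t a :: int
  assumes "[x = t] (mod a)"
  obtains j where "x = t + j * a"
  using assms by (metis cong_iff_lin cong_sym mult.commute)

lemma cong_eq_or_eq_add:
  fixes x t a :: int
  assumes "0 \<le> x" "[x = t] (mod a)" "t < a" "x < t + 2 * a"
  shows "x = t \<or> x = t + a"
proof -
  obtain j where j: "x = t + j * a"
    using assms(2) by (rule cong_int_eqE)
  with assms have "0 < (j + 1) * a" "0 < (2 - j) * a"
    by (simp_all add: algebra_simps)
  moreover have "0 < a"
    using assms by linarith
  ultimately have "-1 < j" "j < 2"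
    by (simp_all add: zero_less_mult_iff)
  then have "j = 0 \<or> j = 1" by auto
  with j show ?thesis by auto
qed

lemma cong_le_of_less_add:
  fixes a w n :: int
  assumes "0 < a" "[w = n] (mod a)" "w < n + a"
  shows "w \<le> n"
proof -
  obtain q where q: "n - w = a * q"
    using assms(2) by (metis cong_iff_dvd_diff cong_sym dvdE)
  with assms(3) have "a * (-1) < a * q" by simp
  with assms(1) have "-1 < q" by (meson mult_less_cancel_left_pos)
  then have "0 \<le> q" by simp
  with q assms(1) show ?thesis
    by (metis diff_ge_0_iff_ge mult_nonneg_nonneg less_imp_le)
qed

lemma cong_residue_mult_solvable:
  fixes a b n :: int
  assumes "0 < a" "coprime a b"
  obtains t where "0 \<le> t" "t < a" "[t * b = n] (mod a)"
proof -
  obtain s where s: "[b * s = 1] (mod a)"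
    using cong_solve_coprime_int assms(2) by (metis coprime_commute)
  define t where "t = (n * s) mod a"
  have "[t * b = n * s * b] (mod a)"
    unfolding t_def by (intro cong_scalar_right) simp
  also have "n * s * b = n * (b * s)"
    by (simp add: ac_simps)
  also have "[n * (b * s) = n * 1] (mod a)"
    using s by (intro cong_mult cong_refl)
  finally show ?thesis
    using that[of t] assms(1) by (simp add: t_def)
qed

lemma num_reps_three:
  "num_reps n [a, b, c] = card {(x, y, z). a * int x + b * int y + c * int z = n}"
proof -
  let ?T = "{(x, y, z). a * int x + b * int y + c * int z = n}"
  have "{xs. length xs = length [a, b, c] \<and>
      (\<Sum>j<length [a, b, c]. [a, b, c] ! j * int (xs ! j)) = n} = (\<lambda>(x, y, z). [x, y, z]) ` ?T"
  proof (intro set_eqI iffI)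
    fix xs assume "xs \<in> {xs. length xs = length [a, b, c] \<and>
      (\<Sum>j<length [a, b, c]. [a, b, c] ! j * int (xs ! j)) = n}"
    then have len: "length xs = 3"
      and sum: "a * int (xs ! 0) + b * int (xs ! 1) + c * int (xs ! 2) = n"
      by (auto simp: numeral_3_eq_3 numeral_2_eq_2 lessThan_Suc ac_simps)
    have "xs = [xs ! 0, xs ! 1, xs ! 2]"
      using len by (cases xs; cases "tl xs"; cases "tl (tl xs)") auto
    with sum show "xs \<in> (\<lambda>(x, y, z). [x, y, z]) ` ?T"
      by (auto simp: image_iff intro!: exI[of _ "(xs ! 0, xs ! 1, xs ! 2)"])
  qed (auto simp: numeral_3_eq_3 lessThan_Suc ac_simps)
  moreover have "inj_on (\<lambda>(x, y, z). [x, y, z]) ?T"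
    by (auto simp: inj_on_def)
  ultimately show ?thesis
    unfolding num_reps_def by (simp add: card_image)
qed

definition rep_pairs :: "int \<Rightarrow> int \<Rightarrow> int \<Rightarrow> int \<Rightarrow> int \<Rightarrow> int \<Rightarrow> (int \<times> int) set" where
  "rep_pairs a b c e t n =
     {(y, z). 0 \<le> y \<and> 0 \<le> z \<and> [y + z * e = t] (mod a) \<and> y * b + z * c \<le> n}"

lemma mem_rep_pairs_iff [simp]:
  "(y, z) \<in> rep_pairs a b c e t n \<longleftrightarrow>
     0 \<le> y \<and> 0 \<le> z \<and> [y + z * e = t] (mod a) \<and> y * b + z * c \<le> n"
  by (simp add: rep_pairs_def)

lemma rep_pairs_memI:
  fixes a b c e t M y z j :: int
  assumes "0 \<le> y" "0 \<le> z" "y + z * e = t + j * a" "y * b + z * c \<le> M"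
  shows "(y, z) \<in> rep_pairs a b c e t M"
  using assms cong_of_eq_add_mult[of "y + z * e" t j a] by simp

lemma finite_rep_pairs:
  assumes "0 < b" "0 < c"
  shows "finite (rep_pairs a b c e t n)"
proof (rule finite_subset)
  show "rep_pairs a b c e t n \<subseteq> {0..n} \<times> {0..n}"
  proof
    fix p assume "p \<in> rep_pairs a b c e t n"
    then obtain y z where p: "p = (y, z)" and yz: "0 \<le> y" "0 \<le> z" "y * b + z * c \<le> n"
      by (cases p) auto
    have "y \<le> y * b" "z \<le> z * c" "0 \<le> y * b" "0 \<le> z * c"
      using yz assms by (simp_all add: mult_le_cancel_left1)
    then show "p \<in> {0..n} \<times> {0..n}"
      using p yz by auto
  qed
qed simp

lemma weight_cong:
  fixes a b c e y z :: int
  assumes "[c = e * b] (mod a)"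
  shows "[y * b + z * c = (y + z * e) * b] (mod a)"
proof -
  have "[y * b + z * c = y * b + z * (e * b)] (mod a)"
    using assms by (intro cong_add cong_mult cong_refl)
  then show ?thesis by (simp add: algebra_simps)
qed

lemma weight_cong_iff:
  fixes a b c e t n y z :: int
  assumes "coprime a b" "[c = e * b] (mod a)" "[t * b = n] (mod a)"
  shows "[y * b + z * c = n] (mod a) \<longleftrightarrow> [y + z * e = t] (mod a)"
proof -
  have "[y * b + z * c = n] (mod a) \<longleftrightarrow> [(y + z * e) * b = t * b] (mod a)"
    using weight_cong[OF assms(2)] assms(3) by (meson cong_sym cong_trans)
  also have "\<dots> \<longleftrightarrow> [y + z * e = t] (mod a)"
    using cong_mult_rcancel[of b a "y + z * e" t] assms(1) by (simp add: coprime_commute)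
  finally show ?thesis .
qed

lemma num_reps_eq_card_rep_pairs:
  assumes "0 < a" "coprime a b" "[c = e * b] (mod a)" "[t * b = n] (mod a)"
  shows "num_reps n [a, b, c] = card (rep_pairs a b c e t n)"
proof -
  let ?T = "{(x, y, z). a * int x + b * int y + c * int z = n}"
  let ?p = "\<lambda>(x :: nat, y :: nat, z :: nat). (int y, int z)"
  have cong_iff: "[y * b + z * c = n] (mod a) \<longleftrightarrow> [y + z * e = t] (mod a)" for y z
    by (rule weight_cong_iff[OF assms(2-4)])
  have "bij_betw ?p ?T (rep_pairs a b c e t n)"
  proof (rule bij_betw_imageI)
    show "inj_on ?p ?T"
      using assms(1) by (auto simp: inj_on_def)
    show "?p ` ?T = rep_pairs a b c e t n"
    proof (intro equalityI subsetI)
      fix p assume "p \<in> ?p ` ?T"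
      then obtain x y z where p: "p = (int y, int z)" and sum: "a * int x + b * int y + c * int z = n"
        by auto
      have "[int y * b + int z * c = n] (mod a)"
        using sum by (auto simp: cong_iff_dvd_diff algebra_simps)
      then have "[int y + int z * e = t] (mod a)"
        using cong_iff by blast
      moreover have "0 \<le> a * int x"
        using assms(1) by simp
      then have "int y * b + int z * c \<le> n"
        using sum by (simp add: algebra_simps)
      ultimately show "p \<in> rep_pairs a b c e t n"
        using p by simp
    next
      fix p assume "p \<in> rep_pairs a b c e t n"
      then obtain y z where p: "p = (y, z)" and yz: "0 \<le> y" "0 \<le> z" "y * b + z * c \<le> n"
        and "[y * b + z * c = n] (mod a)"
        using cong_iff by (cases p) auto
      then obtain q where q: "n - y * b - z * c = a * q"
        by (metis cong_iff_dvd_diff cong_sym diff_diff_eq dvdE)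
      with yz assms(1) have "0 \<le> q"
        by (metis diff_diff_eq diff_ge_0_iff_ge zero_le_mult_iff not_less)
      with q yz have "(nat q, nat y, nat z) \<in> ?T"
        by (simp add: algebra_simps)
      moreover have "p = ?p (nat q, nat y, nat z)"
        using p yz by simp
      ultimately show "p \<in> ?p ` ?T"
        by (rule rev_image_eqI)
    qed
  qed
  then show ?thesis
    by (simp add: num_reps_three bij_betw_same_card)
qed

lemma rep_pairs_subset_of_less_add:
  assumes "0 < a" "[c = e * b] (mod a)" "[t * b = n] (mod a)" "M < n + a"
  shows "rep_pairs a b c e t M \<subseteq> rep_pairs a b c e t n"
proof clarify
  fix y z assume yz: "(y, z) \<in> rep_pairs a b c e t M"
  then have "[y * b + z * c = (y + z * e) * b] (mod a)" "[(y + z * e) * b = t * b] (mod a)"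
    using weight_cong[OF assms(2)] by (auto intro: cong_scalar_right)
  then have "[y * b + z * c = n] (mod a)"
    using assms(3) by (meson cong_trans)
  then have "y * b + z * c \<le> n"
    using yz assms(1,4) by (intro cong_le_of_less_add) auto
  with yz show "(y, z) \<in> rep_pairs a b c e t n" by simp
qed

lemma three_le_card_rep_pairsI:
  assumes "0 < b" "0 < c" "distinct [p, q, r]"
    and "p \<in> rep_pairs a b c e t n" "q \<in> rep_pairs a b c e t n" "r \<in> rep_pairs a b c e t n"
  shows "3 \<le> card (rep_pairs a b c e t n)"
proof -
  have "card {p, q, r} \<le> card (rep_pairs a b c e t n)"
    using assms by (intro card_mono finite_rep_pairs) auto
  with assms(3) show ?thesis by simp
qed

text \<open>A pair of weight at most \<open>M\<close> in the class of \<open>n > M - a\<close> has weight congruent to \<open>n\<close>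
  and below \<open>n + a\<close>, hence at most \<open>n\<close>.\<close>
lemma p_frobenius_2_eqI:
  fixes a b c e t\<^sub>0 M :: int and P Q :: "int \<times> int"
  assumes pos: "0 < a" "0 < b" "0 < c" and cop: "coprime a b" and ce: "[c = e * b] (mod a)"
    and three: "\<And>t. 0 \<le> t \<Longrightarrow> t < a \<Longrightarrow> 3 \<le> card (rep_pairs a b c e t M)"
    and t\<^sub>0: "[t\<^sub>0 * b = M - a] (mod a)"
    and two: "\<And>y z. (y, z) \<in> rep_pairs a b c e t\<^sub>0 (M - a) \<Longrightarrow> (y, z) \<in> {P, Q}"
  shows "p_frobenius 2 [a, b, c] = M - a"
  unfolding p_frobenius_def
proof (rule Greatest_equality)
  have "rep_pairs a b c e t\<^sub>0 (M - a) \<subseteq> {P, Q}"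
  proof
    fix p assume "p \<in> rep_pairs a b c e t\<^sub>0 (M - a)"
    then show "p \<in> {P, Q}"
      using two[of "fst p" "snd p"] by (simp del: mem_rep_pairs_iff)
  qed
  then have "card (rep_pairs a b c e t\<^sub>0 (M - a)) \<le> card {P, Q}"
    by (intro card_mono) simp_all
  also have "\<dots> \<le> 2"
    by (simp add: card_insert_if)
  finally show "num_reps (M - a) [a, b, c] \<le> 2"
    by (simp add: num_reps_eq_card_rep_pairs[OF pos(1) cop ce t\<^sub>0])
next
  fix n assume le2: "num_reps n [a, b, c] \<le> 2"
  obtain t where t: "0 \<le> t" "t < a" "[t * b = n] (mod a)"
    using pos(1) cop by (rule cong_residue_mult_solvable)
  show "n \<le> M - a"
  proof (rule ccontr)
    assume "\<not> n \<le> M - a"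
    then have "rep_pairs a b c e t M \<subseteq> rep_pairs a b c e t n"
      using pos(1) ce t(3) by (intro rep_pairs_subset_of_less_add) auto
    then have "card (rep_pairs a b c e t M) \<le> card (rep_pairs a b c e t n)"
      using finite_rep_pairs[OF pos(2,3)] by (rule card_mono[rotated])
    with three[OF t(1,2)] le2 show False
      by (simp add: num_reps_eq_card_rep_pairs[OF pos(1) cop ce t(3)])
  qed
qed

section \<open>Triples with an explicit 2-Frobenius number\<close>

context
  fixes A B c e :: int
  assumes A: "1 \<le> A" and B: "0 < B" and cop: "coprime A B" and ce: "[c = e * B] (mod A)"
    and c_large: "(3 * A - 1) * B - A < c"
begin

lemma large_third_pos: "0 < c"
proof -
  have "1 * B \<le> A * B" "A * 1 \<le> A * B" "0 < A * B"
    using A B by (intro mult_right_mono mult_left_mono mult_pos_pos; simp)+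
  moreover have "(3 * A - 1) * B - A = 3 * (A * B) - B - A"
    by (simp add: algebra_simps)
  ultimately show ?thesis
    using c_large by linarith
qed

lemma large_third_three_reps:
  assumes "0 \<le> t" "t < A"
  shows "3 \<le> card (rep_pairs A B c e t ((3 * A - 1) * B))"
proof (rule three_le_card_rep_pairsI[OF B large_third_pos])
  have "(t + 2 * A) * B \<le> (3 * A - 1) * B"
    using assms B by (intro mult_right_mono) auto
  moreover have "t * B \<le> (t + A) * B" "(t + A) * B \<le> (t + 2 * A) * B"
    using assms B by (intro mult_right_mono; simp)+
  ultimately show "(t, 0) \<in> rep_pairs A B c e t ((3 * A - 1) * B)"
    "(t + A, 0) \<in> rep_pairs A B c e t ((3 * A - 1) * B)"
    "(t + 2 * A, 0) \<in> rep_pairs A B c e t ((3 * A - 1) * B)"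
    using assms A by (auto intro: cong_of_eq_add_mult)
qed (use A in auto)

lemma large_third_excluded:
  assumes yz: "(y, z) \<in> rep_pairs A B c e (A - 1) ((3 * A - 1) * B - A)"
  shows "(y, z) \<in> {(A - 1, 0), (2 * A - 1, 0)}"
proof -
  have "z = 0"
  proof (rule ccontr)
    assume "z \<noteq> 0"
    with yz have "c \<le> z * c" "0 \<le> y * B"
      using large_third_pos B by (simp_all add: mult_le_cancel_right1)
    with yz c_large show False by simp
  qed
  moreover have "y < A - 1 + 2 * A"
  proof (rule ccontr)
    assume "\<not> ?thesis"
    then have "(3 * A - 1) * B \<le> y * B"
      using B by (intro mult_right_mono) auto
    with yz \<open>z = 0\<close> A show False by simp
  qed
  ultimately have "y = A - 1 \<or> y = A - 1 + A"
    using yz A by (intro cong_eq_or_eq_add) auto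
  with \<open>z = 0\<close> show ?thesis by auto
qed

lemma p_frobenius_2_large_third: "p_frobenius 2 [A, B, c] = (3 * A - 1) * B - A"
proof (rule p_frobenius_2_eqI[OF _ B large_third_pos cop ce large_third_three_reps _
      large_third_excluded])
  show "[(A - 1) * B = (3 * A - 1) * B - A] (mod A)"
    by (rule cong_of_eq_add_mult[where j = "1 - 2 * B"]) (simp add: algebra_simps)
qed (use A in simp)

end

context
  fixes A B c :: int
  assumes A: "2 \<le> A" and B: "0 < B" and c: "0 < c" and cop: "coprime A B"
    and dvd: "A dvd c" and c_le: "c \<le> A * B" and c_gt: "A * B - A < 2 * c"
begin

lemma dvd_third_three_reps:
  assumes "0 \<le> t" "t < A"
  shows "3 \<le> card (rep_pairs A B c 0 t ((2 * A - 1) * B))"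
proof (rule three_le_card_rep_pairsI[OF B c])
  have tB: "t * B \<le> (A - 1) * B"
    using assms B by (intro mult_right_mono) auto
  have M: "(2 * A - 1) * B = (A - 1) * B + A * B" "(t + A) * B = t * B + A * B"
    by (simp_all add: algebra_simps)
  have "0 \<le> A * B"
    using A B by simp
  then have "t * B \<le> (2 * A - 1) * B" "t * B + c \<le> (2 * A - 1) * B"
    "(t + A) * B \<le> (2 * A - 1) * B"
    using c_le tB M by linarith+
  then show "(t, 0) \<in> rep_pairs A B c 0 t ((2 * A - 1) * B)"
    "(t, 1) \<in> rep_pairs A B c 0 t ((2 * A - 1) * B)"
    "(t + A, 0) \<in> rep_pairs A B c 0 t ((2 * A - 1) * B)"
    using assms A by (auto intro: cong_of_eq_add_mult)
qed (use A in auto)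

lemma dvd_third_excluded:
  assumes yz: "(y, z) \<in> rep_pairs A B c 0 (A - 1) ((2 * A - 1) * B - A)"
  shows "(y, z) \<in> {(A - 1, 0), (A - 1, 1)}"
proof -
  have zc: "0 \<le> z * c"
    using yz c by simp
  have "y < A - 1 + A"
  proof (rule ccontr)
    assume "\<not> ?thesis"
    then have "(2 * A - 1) * B \<le> y * B"
      using B by (intro mult_right_mono) auto
    with yz zc A show False by simp
  qed
  then have y: "y = A - 1"
    using cong_eq_or_eq_add[of y "A - 1" A] yz A by simp
  have "z \<le> 1"
  proof (rule ccontr)
    assume "\<not> ?thesis"
    then have "2 * c \<le> z * c"
      using c by (intro mult_right_mono) auto
    with yz y c_gt show False by (simp add: algebra_simps)
  qed
  with y yz show ?thesis by auto
qed

lemma p_frobenius_2_dvd_third: "p_frobenius 2 [A, B, c] = (2 * A - 1) * B - A"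
proof (rule p_frobenius_2_eqI[OF _ B c cop _ dvd_third_three_reps _ dvd_third_excluded])
  show "[c = 0 * B] (mod A)"
    using dvd by (simp add: cong_0_iff)
  show "[(A - 1) * B = (2 * A - 1) * B - A] (mod A)"
    by (rule cong_of_eq_add_mult[where j = "1 - B"]) (simp add: algebra_simps)
qed (use A in simp)

end

lemma rep_pairs_pred_residue_cases:
  fixes A B c P W y z :: int
  assumes P: "1 \<le> P" "P < A" and B: "0 < B" and c: "P * B < c"
    and W: "W \<le> (A - 1) * B + c - A" "W < (P - 1 + 2 * A) * B"
    and yz: "(y, z) \<in> rep_pairs A B c P (P - 1) W"
  shows "(y, z) \<in> {(P - 1, 0), (P - 1 + A, 0)}"
proof -
  define x where "x = y + z * P"
  define k where "k = c - P * B"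
  have weight: "y * B + z * c = x * B + z * k"
    by (simp add: x_def k_def algebra_simps)
  have zk: "0 \<le> z * k" "z \<noteq> 0 \<Longrightarrow> k \<le> z * k"
    using yz c by (simp_all add: k_def mult_le_cancel_right1)
  have "x < P - 1 + 2 * A"
  proof (rule ccontr)
    assume "\<not> ?thesis"
    then have "(P - 1 + 2 * A) * B \<le> x * B"
      using B by (intro mult_right_mono) auto
    with yz weight zk W(2) show False by simp
  qed
  then have "x = P - 1 \<or> x = P - 1 + A"
    using yz P by (intro cong_eq_or_eq_add) (auto simp: x_def)
  then show ?thesis
  proof
    assume "x = P - 1"
    have "z = 0"
    proof (rule ccontr)
      assume "z \<noteq> 0"
      with yz P have "1 * P \<le> z * P"
        by (intro mult_right_mono) auto
      with yz \<open>x = P - 1\<close> show False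
        by (simp add: x_def)
    qed
    with \<open>x = P - 1\<close> show ?thesis by (simp add: x_def)
  next
    assume "x = P - 1 + A"
    with yz weight W(1) have "z * k \<le> k - A"
      by (simp add: k_def algebra_simps)
    with zk P have "z = 0"
      by fastforce
    with \<open>x = P - 1 + A\<close> show ?thesis by (simp add: x_def)
  qed
qed

context
  fixes A B c P :: int
  assumes P: "1 \<le> P" "P < A" and B: "0 < B" and cop: "coprime A B"
    and ce: "[c = P * B] (mod A)" and c_ge: "A * B \<le> c" and c_gt: "P * B < c"
    and c_less: "c - P * B < A * B + A"
begin

lemma mid_third_pos: "0 < c"
  using P B c_ge mult_pos_pos[of A B] by linarith

lemma mid_third_three_reps:
  assumes t: "0 \<le> t" "t < A"
  shows "3 \<le> card (rep_pairs A B c P t ((A - 1) * B + c))"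
proof -
  have tB: "t * B \<le> (A - 1) * B"
    using t B by (intro mult_right_mono) auto
  then have in0: "(t, 0) \<in> rep_pairs A B c P t ((A - 1) * B + c)"
    and in1: "(t + A, 0) \<in> rep_pairs A B c P t ((A - 1) * B + c)"
    using t c_ge mid_third_pos by (auto simp: algebra_simps intro: cong_of_eq_add_mult)
  have in2: "(if t < P then t + A - P else t - P, 1) \<in> rep_pairs A B c P t ((A - 1) * B + c)"
  proof (rule rep_pairs_memI[where j = "if t < P then 1 else 0"])
    have "(if t < P then t + A - P else t - P) * B \<le> (A - 1) * B"
      using t P B by (intro mult_right_mono) auto
    then show "(if t < P then t + A - P else t - P) * B + 1 * c \<le> (A - 1) * B + c"
      by simp
  qed (use t P in auto)
  show ?thesis
    by (rule three_le_card_rep_pairsI[OF B mid_third_pos _ in0 in1 in2]) (use P in auto)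
qed

lemma mid_third_excluded:
  assumes "(y, z) \<in> rep_pairs A B c P (P - 1) ((A - 1) * B + c - A)"
  shows "(y, z) \<in> {(P - 1, 0), (P - 1 + A, 0)}"
  by (rule rep_pairs_pred_residue_cases[OF P B c_gt _ _ assms]) (use c_less in \<open>simp_all add: algebra_simps\<close>)

lemma p_frobenius_2_mid_third: "p_frobenius 2 [A, B, c] = (A - 1) * B + c - A"
proof (rule p_frobenius_2_eqI[OF _ B mid_third_pos cop ce mid_third_three_reps _
      mid_third_excluded])
  obtain q where "c = P * B + q * A"
    using ce by (rule cong_int_eqE)
  then show "[(P - 1) * B = (A - 1) * B + c - A] (mod A)"
    by (intro cong_of_eq_add_mult[where j = "1 - B - q"]) (simp add: algebra_simps)
qed (use P in simp)

end

context
  fixes A B c P :: int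
  assumes P: "1 \<le> P" "P < A" and B_eq: "B = 2 * A + P" and cop: "coprime A B"
    and ce: "[c = P * B] (mod A)"
begin

lemma third_mult_pos: "0 < B" "0 < A * B" "0 < P * B"
  using P B_eq by simp_all

lemma third_mult_three_reps:
  assumes c: "0 < c" and M: "(A - P - 1) * B + c \<le> M" "(B - 1) * B \<le> M"
    and t: "0 \<le> t" "t < A"
  shows "3 \<le> card (rep_pairs A B c P t M)"
proof -
  have "t * B \<le> (t + A) * B" "(t + A) * B \<le> (B - 1) * B"
    using t P B_eq third_mult_pos by (intro mult_right_mono; simp)+
  then have in0: "(t, 0) \<in> rep_pairs A B c P t M" and in1: "(t + A, 0) \<in> rep_pairs A B c P t M"
    using t M by (auto intro: cong_of_eq_add_mult)
  show ?thesis
  proof (cases "t < P")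
    case True
    have "(t + 2 * A) * B \<le> (B - 1) * B"
      using True B_eq third_mult_pos by (intro mult_right_mono) auto
    then have "(t + 2 * A, 0) \<in> rep_pairs A B c P t M"
      using t M by (auto intro: cong_of_eq_add_mult)
    from three_le_card_rep_pairsI[OF third_mult_pos(1) c _ in0 in1 this] P show ?thesis
      by simp
  next
    case False
    have "(t - P) * B \<le> (A - P - 1) * B"
      using False t third_mult_pos by (intro mult_right_mono) auto
    then have "(t - P, 1) \<in> rep_pairs A B c P t M"
      using t M False by simp
    from three_le_card_rep_pairsI[OF third_mult_pos(1) c _ in0 in1 this] P show ?thesis
      by simp
  qed
qed

lemma p_frobenius_2_third_pred_mult:
  assumes c_eq: "c + 1 = (A + 2 * P) * B"
  shows "p_frobenius 2 [A, B, c] = (B - 1) * B - A"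
proof -
  have "(A + 2 * P) * B = A * B + 2 * (P * B)"
    by (simp add: algebra_simps)
  then have "P * B < (A + 2 * P) * B - 1"
    using third_mult_pos by linarith
  then have c: "0 < c" "P * B < c"
    using c_eq third_mult_pos by simp_all
  have M: "(A - P - 1) * B + c \<le> (B - 1) * B"
    using c_eq by (simp add: B_eq algebra_simps)
  show ?thesis
  proof (rule p_frobenius_2_eqI[OF _ third_mult_pos(1) c(1) cop ce])
    show "3 \<le> card (rep_pairs A B c P t ((B - 1) * B))" if "0 \<le> t" "t < A" for t
      using third_mult_three_reps[OF c(1) M _ that] by simp
    show "[(P - 1) * B = (B - 1) * B - A] (mod A)"
      by (rule cong_of_eq_add_mult[where j = "1 - 2 * B"]) (simp add: B_eq algebra_simps)
    show "(y, z) \<in> {(P - 1, 0), (P - 1 + A, 0)}"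
      if "(y, z) \<in> rep_pairs A B c P (P - 1) ((B - 1) * B - A)" for y z
      by (rule rep_pairs_pred_residue_cases[OF P third_mult_pos(1) c(2) _ _ that])
        (use c_eq third_mult_pos P in \<open>simp_all add: B_eq algebra_simps\<close>)
  qed (use P in simp_all)
qed

lemma third_succ_mult_excluded:
  assumes c_eq: "c = (A + 2 * P) * B + 1"
    and yz: "(y, z) \<in> rep_pairs A B c P (A - 1) ((A - P - 1) * B + c - A)"
  shows "(y, z) \<in> {(A - 1, 0), (2 * A - 1, 0)}"
proof -
  define x where "x = y + z * P"
  define k where "k = c - P * B"
  have weight: "y * B + z * c = x * B + z * k"
    by (simp add: x_def k_def algebra_simps)
  have x: "0 \<le> x" "[x = A - 1] (mod A)"
    using yz P by (auto simp: x_def)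
  have bound: "x * B + z * k \<le> (A - 1) * B + k - A"
    using yz weight by (simp add: k_def algebra_simps)
  have k: "0 < k"
    using c_eq third_mult_pos by (simp add: k_def algebra_simps)
  have "z = 0"
  proof (rule ccontr)
    assume "z \<noteq> 0"
    with yz k have "1 * k \<le> z * k"
      by (intro mult_right_mono) auto
    with bound P have "x * B < (A - 1) * B"
      by linarith
    then have "x < A - 1"
      using third_mult_pos by (simp add: mult_less_cancel_right)
    with x P show False
      using cong_eq_or_eq_add[of x "A - 1" A] by simp
  qed
  have "x < A - 1 + 2 * A"
  proof (rule ccontr)
    assume "\<not> ?thesis"
    then have "(3 * A - 1) * B \<le> x * B"
      using third_mult_pos by (intro mult_right_mono) auto
    moreover have "(3 * A - 1) * B = (2 * A + P - 1) * B + (A - P) * B"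
      "(A - 1) * B + k - A = (2 * A + P - 1) * B + 1 - A"
      by (simp_all add: k_def c_eq algebra_simps)
    moreover have "0 < (A - P) * B"
      using P third_mult_pos by simp
    moreover have "x * B \<le> (A - 1) * B + k - A"
      using bound \<open>z = 0\<close> by simp
    ultimately show False
      using P by linarith
  qed
  with x P have "x = A - 1 \<or> x = A - 1 + A"
    by (intro cong_eq_or_eq_add) auto
  with \<open>z = 0\<close> show ?thesis by (auto simp: x_def)
qed

lemma p_frobenius_2_third_succ_mult:
  assumes c_eq: "c = (A + 2 * P) * B + 1"
  shows "p_frobenius 2 [A, B, c] = (A - P - 1) * B + c - A"
proof -
  have c: "0 < c"
    using c_eq P third_mult_pos by (simp add: pos_add_strict)
  have M: "(B - 1) * B \<le> (A - P - 1) * B + c"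
    using c_eq by (simp add: B_eq algebra_simps)
  show ?thesis
  proof (rule p_frobenius_2_eqI[OF _ third_mult_pos(1) c cop ce _ _ third_succ_mult_excluded[OF c_eq]])
    show "3 \<le> card (rep_pairs A B c P t ((A - P - 1) * B + c))" if "0 \<le> t" "t < A" for t
      using third_mult_three_reps[OF c _ M that] by simp
    obtain q where "c = P * B + q * A"
      using ce by (rule cong_int_eqE)
    then show "[(A - 1) * B = (A - P - 1) * B + c - A] (mod A)"
      by (intro cong_of_eq_add_mult[where j = "1 - q"]) (simp add: algebra_simps)
  qed (use P in simp_all)
qed

end

text \<open>The case \<open>k \<le> i - 2\<close> of the theorem: \<open>f = F k\<close>, \<open>g = F (k - 2)\<close>, and \<open>r\<close>, \<open>s\<close> are
  the quotient and the remainder, taken in \<open>{1..f}\<close>, of \<open>F i\<close> by \<open>F k\<close>.\<close>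
context
  fixes A B c f g r s :: int
  assumes f: "2 \<le> f" and g: "1 \<le> g" "2 * g \<le> f" and r: "2 \<le> r" and s: "1 \<le> s" "s \<le> f"
    and A_eq: "A = r * f + s" and AB: "5 * A \<le> 2 * B" and c_eq: "c = f * B - g * A"
    and c_ge: "f * g \<le> c" and cop: "coprime A B"
begin

lemma quot_bounds:
  shows quot_A_gt: "2 * f < A" and quot_B_pos: "0 < B" and quot_gA_pos: "0 < g * A"
    and quot_gA_le: "5 * (g * A) \<le> f * B" and quot_fB_le: "f * B \<le> 2 * c" and quot_c_pos: "0 < c"
proof -
  have "2 * f \<le> r * f"
    using r f by (intro mult_right_mono) auto
  then show A: "2 * f < A"
    using A_eq s by linarith
  then show B: "0 < B"
    using AB f by linarith
  show gA: "0 < g * A"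
    using g A f by simp
  have "g * (5 * A) \<le> g * (2 * B)" "(2 * g) * B \<le> f * B"
    using AB g B by (intro mult_left_mono mult_right_mono; simp)+
  then show K: "5 * (g * A) \<le> f * B"
    by (simp add: algebra_simps)
  show "f * B \<le> 2 * c"
    using K gA c_eq by linarith
  have "0 < f * g"
    using f g by simp
  with c_ge show "0 < c"
    by linarith
qed

lemma quot_cong: "[c = f * B] (mod A)"
  by (rule cong_of_eq_add_mult[where j = "- g"]) (simp add: c_eq)

text \<open>Write \<open>t = y + z f\<close> with \<open>0 \<le> y < f\<close>. The class of \<open>t\<close> contains the pairs
  \<open>(y + a f, z - a)\<close>, and \<open>t + A = (y + s) + (z + r) f\<close> yields further pairs with second
  entry near \<open>r\<close>; which three are cheap enough depends on \<open>z\<close>.\<close>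
lemma quot_three_reps_quotient_ge_2:
  assumes M1: "(s - 1) * B + (r + 2) * c \<le> M"
    and t: "t = y + z * f" "0 \<le> y" "y < f" "2 \<le> z" "z \<le> r" "z = r \<Longrightarrow> y < s"
  shows "3 \<le> card (rep_pairs A B c f t M)"
proof -
  have top: "(y + 2 * f) * B + (z - 2) * c \<le> M"
  proof (cases "z = r")
    case True
    have "(y + 2 * f) * B \<le> (s - 1 + 2 * f) * B"
      using t(6)[OF True] quot_B_pos by (intro mult_right_mono) auto
    with M1 quot_fB_le True show ?thesis
      by (simp add: algebra_simps)
  next
    case False
    have "(y + 2 * f) * B \<le> (3 * f - 1) * B" "(z - 2) * c \<le> (r - 3) * c"
      using False t quot_B_pos quot_c_pos by (intro mult_right_mono; simp)+
    moreover have "(3 * f - 1) * B + (r - 3) * c = (s - 1) * B + (r + 2) * c + (3 * (f * B) - s * B - 5 * c)"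
      by (simp add: algebra_simps)
    moreover have "0 \<le> s * B" "0 \<le> f * B"
      using s f quot_B_pos by simp_all
    moreover have "4 * (f * B) \<le> 5 * c"
      using quot_gA_le c_eq by linarith
    ultimately show ?thesis
      using M1 by linarith
  qed
  have mem: "(y + a * f, z - a) \<in> rep_pairs A B c f t M" if "0 \<le> a" "a \<le> 2" for a
  proof (rule rep_pairs_memI[where j = 0])
    have "(y + a * f) * B + (z - a) * c = (y + 2 * f) * B + (z - 2) * c - (2 - a) * (g * A)"
      by (simp add: c_eq algebra_simps)
    moreover have "0 \<le> (2 - a) * (g * A)"
      using that quot_gA_pos by simp
    ultimately show "(y + a * f) * B + (z - a) * c \<le> M"
      using top by linarith
  qed (use that t f in \<open>auto simp: algebra_simps\<close>)
  show ?thesis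
    by (rule three_le_card_rep_pairsI[OF quot_B_pos quot_c_pos _ mem[of 0] mem[of 1] mem[of 2]])
      (use f in simp_all)
qed

lemma quot_three_reps_quotient_1:
  assumes M1: "(s - 1) * B + (r + 2) * c \<le> M" and M2: "(f - 1) * B + (r + 1) * c \<le> M"
    and t: "t = y + f" "0 \<le> y" "y < f"
  shows "3 \<le> card (rep_pairs A B c f t M)"
proof -
  have yB: "y * B \<le> (f - 1) * B" and c2: "2 * c \<le> (r + 1) * c"
    using t r quot_B_pos quot_c_pos by (intro mult_right_mono; simp)+
  have "y * B + 1 * c \<le> M"
    using yB c2 M2 quot_c_pos by linarith
  then have in0: "(y, 1) \<in> rep_pairs A B c f t M"
    using t by (intro rep_pairs_memI[where j = 0]) auto
  have in1: "(y + f, 0) \<in> rep_pairs A B c f t M"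
  proof (rule rep_pairs_memI[where j = 0])
    have "(y + f) * B = y * B + f * B"
      by (simp add: algebra_simps)
    with yB c2 M2 quot_fB_le show "(y + f) * B + 0 * c \<le> M"
      by linarith
  qed (use t f in auto)
  show ?thesis
  proof (cases "f \<le> y + s")
    case True
    have "(y + s - f, r + 2) \<in> rep_pairs A B c f t M"
    proof (rule rep_pairs_memI[where j = 1])
      have "(y + s - f) * B \<le> (s - 1) * B"
        using t quot_B_pos by (intro mult_right_mono) auto
      with M1 show "(y + s - f) * B + (r + 2) * c \<le> M"
        by linarith
    qed (use True t r A_eq in \<open>simp_all add: algebra_simps\<close>)
    from three_le_card_rep_pairsI[OF quot_B_pos quot_c_pos _ in0 in1 this] r f show ?thesis
      by simp
  next
    case False
    have "(y + s, r + 1) \<in> rep_pairs A B c f t M"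
    proof (rule rep_pairs_memI[where j = 1])
      have "(y + s) * B \<le> (f - 1) * B"
        using False quot_B_pos by (intro mult_right_mono) auto
      with M2 show "(y + s) * B + (r + 1) * c \<le> M"
        by linarith
    qed (use t s r A_eq in \<open>simp_all add: algebra_simps\<close>)
    from three_le_card_rep_pairsI[OF quot_B_pos quot_c_pos _ in0 in1 this] r f show ?thesis
      by simp
  qed
qed

lemma quot_three_reps_quotient_0:
  assumes M1: "(s - 1) * B + (r + 2) * c \<le> M" and M2: "(f - 1) * B + (r + 1) * c \<le> M"
    and t: "0 \<le> t" "t < f"
  shows "3 \<le> card (rep_pairs A B c f t M)"
proof -
  have c: "0 \<le> r * c" "r * c \<le> (r + 1) * c" "(r + 1) * c \<le> (r + 2) * c"
    using r quot_c_pos by (simp_all add: algebra_simps)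
  have "t * B \<le> (f - 1) * B"
    using t quot_B_pos by (intro mult_right_mono) auto
  then have in0: "(t, 0) \<in> rep_pairs A B c f t M"
    using t c M2 by (intro rep_pairs_memI[where j = 0]) auto
  have wrap: "(t + s - f * a, r + a) \<in> rep_pairs A B c f t M"
    if "0 \<le> t + s - f * a" "- 1 \<le> a" "(t + s - f * a) * B + (r + a) * c \<le> M" for a
    using that r by (intro rep_pairs_memI[where j = 1]) (auto simp: A_eq algebra_simps)
  have fB: "(f - 1 + s) * B + r * c \<le> M" "(2 * f - 1) * B + (r - 1) * c \<le> M"
    using M1 M2 quot_fB_le by (simp_all add: algebra_simps)
  show ?thesis
  proof (cases "f \<le> t + s")
    case True
    have "(t + s - f) * B \<le> (s - 1) * B" "(t + s) * B \<le> (f - 1 + s) * B"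
      using t quot_B_pos by (intro mult_right_mono; simp)+
    then have "(t + s - f * 1, r + 1) \<in> rep_pairs A B c f t M"
      "(t + s - f * 0, r + 0) \<in> rep_pairs A B c f t M"
      using True t s c M1 fB by (intro wrap; simp; linarith)+
    from three_le_card_rep_pairsI[OF quot_B_pos quot_c_pos _ in0 this] r show ?thesis
      by simp
  next
    case False
    have "(t + s) * B \<le> (f - 1) * B" "(t + s + f) * B \<le> (2 * f - 1) * B"
      using False quot_B_pos by (intro mult_right_mono; simp)+
    then have "(t + s - f * 0, r + 0) \<in> rep_pairs A B c f t M"
      "(t + s - f * (- 1), r + (- 1)) \<in> rep_pairs A B c f t M"
      using False t s c M2 fB by (intro wrap; simp; linarith)+
    from three_le_card_rep_pairsI[OF quot_B_pos quot_c_pos _ in0 this] r show ?thesis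
      by simp
  qed
qed

lemma quot_three_reps:
  assumes M1: "(s - 1) * B + (r + 2) * c \<le> M" and M2: "(f - 1) * B + (r + 1) * c \<le> M"
    and t: "0 \<le> t" "t < A"
  shows "3 \<le> card (rep_pairs A B c f t M)"
proof -
  define y where "y = t mod f"
  define z where "z = t div f"
  have t_eq: "t = y + z * f" and y: "0 \<le> y" "y < f" and "0 \<le> z"
    using t f by (simp_all add: y_def z_def pos_imp_zdiv_nonneg_iff)
  have z_le: "z \<le> r"
  proof (rule ccontr)
    assume "\<not> ?thesis"
    then have "(r + 1) * f \<le> z * f"
      using f by (intro mult_right_mono) auto
    with t t_eq y s A_eq show False
      by (simp add: algebra_simps)
  qed
  have "z = r \<Longrightarrow> y < s"
    using t t_eq A_eq by simp
  consider "2 \<le> z" | "z = 1" | "z = 0"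
    using \<open>0 \<le> z\<close> by linarith
  then show ?thesis
  proof cases
    case 1
    from M1 t_eq y 1 z_le \<open>z = r \<Longrightarrow> y < s\<close> show ?thesis
      by (rule quot_three_reps_quotient_ge_2)
  next
    case 2
    with M1 M2 t_eq y show ?thesis
      by (intro quot_three_reps_quotient_1) auto
  next
    case 3
    with M1 M2 t t_eq y show ?thesis
      by (intro quot_three_reps_quotient_0) auto
  qed
qed

text \<open>The parameter \<open>u \<in> {0, 1}\<close> selects the residue \<open>2 f - u s - 1\<close> of the \<open>2\<close>-Frobenius
  number in the two subcases \<open>g A \<le> s B\<close> and \<open>s B < g A\<close>. Adding \<open>f\<close> times \<open>W\<close> to \<open>g\<close> times
  \<open>Y\<close>, the terms in \<open>A\<close> combine into \<open>J c\<close>, which is too large since \<open>f g \<le> c\<close>.\<close>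
lemma quot_wrap_less_2:
  assumes u: "u = 0 \<or> (u = 1 \<and> s < f)"
    and W: "j * B - z * g \<le> B - (r + 2 - u) * g - 1"
    and Y: "z * f \<le> 2 * f - u * s - 1 + j * A"
  shows "j < 2"
proof (rule ccontr)
  assume "\<not> j < 2"
  define J where "J = j - 1"
  have J: "1 \<le> J"
    using \<open>\<not> j < 2\<close> by (simp add: J_def)
  have "f * (J * B + (r + 2 - u) * g + 1) \<le> f * (z * g)"
    using W f by (intro mult_left_mono) (auto simp: J_def algebra_simps)
  moreover have "g * (z * f) \<le> g * (2 * f - u * s - 1 + j * A)"
    using Y g by (intro mult_left_mono) auto
  moreover have "f * (z * g) - f * (J * B + (r + 2 - u) * g + 1)
      + (g * (2 * f - u * s - 1 + j * A) - g * (z * f))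
      = s * g - u * (s * g) + u * (f * g) - f - g - J * c"
    by (simp add: c_eq A_eq J_def algebra_simps)
  moreover have "1 * c \<le> J * c"
    using J quot_c_pos by (intro mult_right_mono) auto
  moreover have "s * g - u * (s * g) + u * (f * g) \<le> f * g"
    using u s g by (auto intro: mult_right_mono)
  ultimately show False
    using c_ge f g by linarith
qed

lemma quot_wrap_eq_0:
  assumes u: "u = 0 \<or> (u = 1 \<and> s < f)"
    and W: "j * B - z * g \<le> B - (r + 2 - u) * g - 1"
    and Y: "0 \<le> z * f" "z * f \<le> 2 * f - u * s - 1 + j * A"
  shows "j = 0"
proof -
  have "0 \<le> j"
  proof (rule ccontr)
    assume "\<not> ?thesis"
    then have "j * A \<le> (- 1) * A"
      using quot_A_gt f by (intro mult_right_mono) auto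
    with Y u s quot_A_gt show False
      by auto
  qed
  moreover have "j \<noteq> 1"
  proof
    assume "j = 1"
    have "z \<le> r + 2 - u"
    proof (rule ccontr)
      assume "\<not> ?thesis"
      then have "(r + 3 - u) * f \<le> z * f"
        using f by (intro mult_right_mono) auto
      with Y \<open>j = 1\<close> u s show False
        by (auto simp: A_eq algebra_simps)
    qed
    then have "z * g \<le> (r + 2 - u) * g"
      using g by (intro mult_right_mono) auto
    with W \<open>j = 1\<close> show False
      by simp
  qed
  moreover have "j < 2"
    using u W Y(2) by (rule quot_wrap_less_2)
  ultimately show ?thesis
    by simp
qed

lemma quot_excluded:
  assumes u: "u = 0 \<or> (u = 1 \<and> s < f)"
    and yz: "(y, z) \<in> rep_pairs A B c f (2 * f - u * s - 1)
      ((2 * f - u * s - 1) * B + A * (B - (r + 2 - u) * g - 1))"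
  shows "(y, z) \<in> {(2 * f - u * s - 1, 0), (f - u * s - 1, 1)}"
proof -
  define t where "t = 2 * f - u * s - 1"
  have t: "0 \<le> t" "t < 2 * f" "t < A"
    using u s quot_A_gt by (auto simp: t_def)
  obtain j where j: "y + z * f = t + j * A"
    using yz by (auto simp: t_def elim: cong_int_eqE)
  then have y: "y = t + j * A - z * f"
    by simp
  have "y * B + z * c = t * B + A * (j * B - z * g)"
    unfolding y by (simp add: c_eq algebra_simps)
  with yz have "A * (j * B - z * g) \<le> A * (B - (r + 2 - u) * g - 1)"
    by (simp add: t_def)
  then have W: "j * B - z * g \<le> B - (r + 2 - u) * g - 1"
    using quot_A_gt f by (simp add: mult_le_cancel_left)
  have Y: "0 \<le> z * f" "z * f \<le> t + j * A"
    using j yz f by auto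
  have "j = 0"
    using u W Y unfolding t_def by (rule quot_wrap_eq_0)
  moreover have "z \<le> 1"
  proof (rule ccontr)
    assume "\<not> ?thesis"
    then have "2 * f \<le> z * f"
      using f by (intro mult_right_mono) auto
    with Y t \<open>j = 0\<close> show False
      by simp
  qed
  ultimately have "z = 0 \<or> z = 1" "y = t - z * f"
    using j yz by auto
  then show ?thesis
    by (auto simp: t_def)
qed

lemma p_frobenius_2_quot:
  "p_frobenius 2 [A, B, c] =
     (if g * A \<le> s * B then (s - 1) * B + (r + 2) * c - A else (f - 1) * B + (r + 1) * c - A)"
proof -
  have frob: "p_frobenius 2 [A, B, c] = M - A"
    if u: "u = 0 \<or> (u = 1 \<and> s < f)" and M: "M = (2 * f - u * s - 1) * B + A * (B - (r + 2 - u) * g)"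
      and M_ge: "(s - 1) * B + (r + 2) * c \<le> M" "(f - 1) * B + (r + 1) * c \<le> M" for u M
  proof (rule p_frobenius_2_eqI[OF _ quot_B_pos quot_c_pos cop quot_cong])
    show "3 \<le> card (rep_pairs A B c f t M)" if "0 \<le> t" "t < A" for t
      using M_ge that by (rule quot_three_reps)
    have "M - A = (2 * f - u * s - 1) * B + A * (B - (r + 2 - u) * g - 1)"
      by (simp add: M algebra_simps)
    then show "[(2 * f - u * s - 1) * B = M - A] (mod A)"
      by (intro cong_of_eq_add_mult[where j = "- (B - (r + 2 - u) * g - 1)"]) (simp add: algebra_simps)
    show "(y, z) \<in> {(2 * f - u * s - 1, 0), (f - u * s - 1, 1)}"
      if "(y, z) \<in> rep_pairs A B c f (2 * f - u * s - 1) (M - A)" for y z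
      using u that \<open>M - A = _\<close> by (intro quot_excluded) simp_all
  qed (use quot_A_gt f in simp)
  have M_diff: "((s - 1) * B + (r + 2) * c) - ((f - 1) * B + (r + 1) * c) = s * B - g * A"
    by (simp add: c_eq algebra_simps)
  show ?thesis
  proof (cases "g * A \<le> s * B")
    case True
    have "p_frobenius 2 [A, B, c] = (s - 1) * B + (r + 2) * c - A"
      by (rule frob[of 0]) (use True M_diff in \<open>simp_all add: c_eq A_eq algebra_simps\<close>)
    with True show ?thesis
      by simp
  next
    case False
    have "s < f"
    proof (rule ccontr)
      assume "\<not> s < f"
      with s have "s = f" by simp
      with False quot_gA_le quot_gA_pos show False by simp
    qed
    have "p_frobenius 2 [A, B, c] = (f - 1) * B + (r + 1) * c - A"
      by (rule frob[of 1]) (use False M_diff \<open>s < f\<close> in \<open>simp_all add: c_eq A_eq algebra_simps\<close>)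
    with False show ?thesis
      by simp
  qed
qed

end

text \<open>The case \<open>k = i - 1\<close> of the theorem: \<open>R = F (i - 3)\<close> and \<open>S = F (i - 4)\<close>, so that
  \<open>A = F i\<close>, \<open>B = F (i + 2)\<close> and \<open>P = F (i - 1)\<close>.\<close>
context
  fixes A B c P R S :: int
  assumes S: "1 \<le> S" "S \<le> R" "R \<le> 2 * S"
    and A_eq: "A = 3 * R + 2 * S" and B_eq: "B = 8 * R + 5 * S" and P_eq: "P = 2 * R + S"
    and c_eq: "c = P * B - R * A" and cop: "coprime A B"
begin

lemma RS_bounds:
  shows RS_B_pos: "0 < B" and RS_c_pos: "0 < c"
    and RS_weight_bounds: "(A - 1) * B + c \<le> (S - 1) * B + 3 * c"
      "(R - 1 + A) * B \<le> (S - 1) * B + 3 * c"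
      "(R + S - 1) * B + 2 * c \<le> (S - 1) * B + 3 * c"
      "(P - 1) * B + 2 * c \<le> (S - 1) * B + 3 * c"
proof -
  have RR: "R * R \<le> 2 * (R * S)" and RS: "0 \<le> R * S" "0 \<le> S * S" "0 \<le> R * R"
    using S by (simp_all add: mult_left_mono algebra_simps)
  have c: "c = 13 * (R * R) + 16 * (R * S) + 5 * (S * S)"
    by (simp add: c_eq P_eq A_eq B_eq algebra_simps)
  show "0 < B"
    using S by (simp add: B_eq)
  have "0 < S * S"
    using S by simp
  with RS show "0 < c"
    unfolding c by linarith
  have "(S - 1) * B + 3 * c - ((A - 1) * B + c) = 2 * (R * R) + 9 * (R * S) + 5 * (S * S)"
    by (simp add: c P_eq A_eq B_eq algebra_simps)
  with RS show "(A - 1) * B + c \<le> (S - 1) * B + 3 * c"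
    by linarith
  have "(S - 1) * B + 3 * c - (R - 1 + A) * B = 7 * (R * R) + 20 * (R * S) + 10 * (S * S)"
    by (simp add: c P_eq A_eq B_eq algebra_simps)
  with RS show "(R - 1 + A) * B \<le> (S - 1) * B + 3 * c"
    by linarith
  have "(S - 1) * B + 3 * c - ((R + S - 1) * B + 2 * c) = 5 * (R * R) + 11 * (R * S) + 5 * (S * S)"
    by (simp add: c P_eq A_eq B_eq algebra_simps)
  with RS show "(R + S - 1) * B + 2 * c \<le> (S - 1) * B + 3 * c"
    by linarith
  have "(S - 1) * B + 3 * c - ((P - 1) * B + 2 * c) = 6 * (R * S) + 5 * (S * S) - 3 * (R * R)"
    by (simp add: c P_eq A_eq B_eq algebra_simps)
  with RR RS show "(P - 1) * B + 2 * c \<le> (S - 1) * B + 3 * c"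
    by linarith
qed

lemma RS_three_reps:
  assumes t: "0 \<le> t" "t < A"
  shows "3 \<le> card (rep_pairs A B c P t ((S - 1) * B + 3 * c))"
proof -
  let ?M = "(S - 1) * B + 3 * c"
  have mono: "u * B \<le> v * B" if "u \<le> v" for u v
    using that RS_B_pos by (intro mult_right_mono) auto
  have in0: "(t, 0) \<in> rep_pairs A B c P t ?M"
    using t mono[of t "A - 1"] RS_c_pos RS_weight_bounds(1)
    by (intro rep_pairs_memI[where j = 0]) auto
  have in_below_P: "(t + R + S, 1) \<in> rep_pairs A B c P t ?M" if "t < P"
    using t that mono[of "t + R + S" "A - 1"] RS_weight_bounds(1) S
    by (intro rep_pairs_memI[where j = 1]) (auto simp: A_eq P_eq)
  have in_above_P: "(t - P, 1) \<in> rep_pairs A B c P t ?M" if "P \<le> t"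
    using t that mono[of "t - P" "A - 1"] RS_weight_bounds(1) S
    by (intro rep_pairs_memI[where j = 0]) (auto simp: P_eq)
  consider "t < R" | "R \<le> t" "t < P" | "P \<le> t" "t < P + R" | "P + R \<le> t"
    by linarith
  then show ?thesis
  proof cases
    case 1
    have "(t + A, 0) \<in> rep_pairs A B c P t ?M"
      using t 1 mono[of "t + A" "R - 1 + A"] RS_weight_bounds(2)
      by (intro rep_pairs_memI[where j = 1]) auto
    from three_le_card_rep_pairsI[OF RS_B_pos RS_c_pos _ in0 in_below_P this] 1 S show ?thesis
      by (simp add: P_eq A_eq)
  next
    case 2
    have "(t - R, 2) \<in> rep_pairs A B c P t ?M"
      using t 2 mono[of "t - R" "R + S - 1"] RS_weight_bounds(3)
      by (intro rep_pairs_memI[where j = 1]) (auto simp: A_eq P_eq)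
    from three_le_card_rep_pairsI[OF RS_B_pos RS_c_pos _ in0 in_below_P this] 2 show ?thesis
      by simp
  next
    case 3
    have "(t - P + R + S, 2) \<in> rep_pairs A B c P t ?M"
      using t 3 S mono[of "t - P + R + S" "P - 1"] RS_weight_bounds(4)
      by (intro rep_pairs_memI[where j = 1]) (auto simp: A_eq P_eq)
    from three_le_card_rep_pairsI[OF RS_B_pos RS_c_pos _ in0 in_above_P this] 3 show ?thesis
      by simp
  next
    case 4
    have "(t - P - R, 3) \<in> rep_pairs A B c P t ?M"
      using t 4 S mono[of "t - P - R" "S - 1"]
      by (intro rep_pairs_memI[where j = 1]) (auto simp: A_eq P_eq)
    from three_le_card_rep_pairsI[OF RS_B_pos RS_c_pos _ in0 in_above_P this] 4 S show ?thesis
      by (simp add: P_eq)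
  qed
qed

text \<open>As for \<open>quot_wrap_less_2\<close>: \<open>P\<close> times \<open>W\<close> plus \<open>R\<close> times \<open>Y\<close> leaves \<open>J c \<le> R S - P - R\<close>.\<close>
lemma RS_wrap_less_2:
  assumes W: "j * B - z * R \<le> B - 3 * R - 1" and Y: "z * P \<le> A - 1 + j * A"
  shows "j < 2"
proof (rule ccontr)
  assume "\<not> j < 2"
  define J where "J = j - 1"
  have J: "1 \<le> J"
    using \<open>\<not> j < 2\<close> by (simp add: J_def)
  have "P * (J * B + 3 * R + 1) \<le> P * (z * R)"
    using W S by (intro mult_left_mono) (auto simp: J_def P_eq algebra_simps)
  moreover have "R * (z * P) \<le> R * (A - 1 + j * A)"
    using Y S by (intro mult_left_mono) auto
  moreover have "P * (z * R) - P * (J * B + 3 * R + 1) + (R * (A - 1 + j * A) - R * (z * P))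
      = R * S - P - R - J * c"
    by (simp add: c_eq A_eq P_eq J_def algebra_simps)
  moreover have "1 * c \<le> J * c"
    using J RS_c_pos by (intro mult_right_mono) auto
  moreover have "R * S \<le> c"
    using S by (simp add: c_eq A_eq B_eq P_eq algebra_simps)
  ultimately show False
    using S P_eq by linarith
qed

lemma RS_wrap_eq_0:
  assumes W: "j * B - z * R \<le> B - 3 * R - 1" and Y: "0 \<le> z * P" "z * P \<le> A - 1 + j * A"
  shows "j = 0"
proof -
  have A: "2 \<le> A" "A \<le> 2 * P"
    using S by (simp_all add: A_eq P_eq)
  have "0 \<le> j"
  proof (rule ccontr)
    assume "\<not> ?thesis"
    then have "j * A \<le> (- 1) * A"
      using A by (intro mult_right_mono) auto
    with Y show False
      by simp
  qed
  moreover have "j \<noteq> 1"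
  proof
    assume "j = 1"
    have "z \<le> 3"
    proof (rule ccontr)
      assume "\<not> ?thesis"
      then have "4 * P \<le> z * P"
        using S by (intro mult_right_mono) (auto simp: P_eq)
      with Y \<open>j = 1\<close> A show False
        by simp
    qed
    then have "z * R \<le> 3 * R"
      using S by (intro mult_right_mono) auto
    with W \<open>j = 1\<close> show False
      by simp
  qed
  moreover have "j < 2"
    using W Y(2) by (rule RS_wrap_less_2)
  ultimately show ?thesis
    by simp
qed

lemma RS_excluded:
  assumes yz: "(y, z) \<in> rep_pairs A B c P (A - 1) ((S - 1) * B + 3 * c - A)"
  shows "(y, z) \<in> {(A - 1, 0), (R + S - 1, 1)}"
proof -
  have A: "2 \<le> A" "A \<le> 2 * P"
    using S by (simp_all add: A_eq P_eq)
  obtain j where j: "y + z * P = A - 1 + j * A"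
    using yz by (auto elim: cong_int_eqE)
  then have y: "y = A - 1 + j * A - z * P"
    by simp
  have "y * B + z * c = (A - 1) * B + A * (j * B - z * R)"
    unfolding y by (simp add: c_eq algebra_simps)
  moreover have "(S - 1) * B + 3 * c - A = (A - 1) * B + A * (B - 3 * R - 1)"
    by (simp add: c_eq P_eq B_eq A_eq algebra_simps)
  ultimately have "A * (j * B - z * R) \<le> A * (B - 3 * R - 1)"
    using yz by simp
  then have W: "j * B - z * R \<le> B - 3 * R - 1"
    using A by (simp add: mult_le_cancel_left)
  have Y: "0 \<le> z * P" "z * P \<le> A - 1 + j * A"
    using j yz S by (auto simp: P_eq)
  have "j = 0"
    using W Y by (rule RS_wrap_eq_0)
  moreover have "z \<le> 1"
  proof (rule ccontr)
    assume "\<not> ?thesis"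
    then have "2 * P \<le> z * P"
      using S by (intro mult_right_mono) (auto simp: P_eq)
    with Y \<open>j = 0\<close> A show False
      by simp
  qed
  ultimately have "z = 0 \<or> z = 1" "y = A - 1 - z * P"
    using y yz by auto
  then show ?thesis
    by (auto simp: A_eq P_eq)
qed

lemma p_frobenius_2_RS: "p_frobenius 2 [A, B, c] = (S - 1) * B + 3 * c - A"
proof (rule p_frobenius_2_eqI[OF _ RS_B_pos RS_c_pos cop _ RS_three_reps _ RS_excluded])
  show "[c = P * B] (mod A)"
    by (rule cong_of_eq_add_mult[where j = "- R"]) (simp add: c_eq)
  show "[(A - 1) * B = (S - 1) * B + 3 * c - A] (mod A)"
    by (rule cong_of_eq_add_mult[where j = "1 - B + 3 * R"]) (simp add: c_eq P_eq B_eq A_eq algebra_simps)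
qed (use S A_eq in simp)

end

section \<open>Fibonacci numbers\<close>

lemma F_add_two: "F (n + 2) = F (n + 1) + F n"
  by (simp add: F_def fib_plus_2)

lemma F_nonneg [simp]: "0 \<le> F n"
  by (simp add: F_def)

lemma F_pos: "0 < n \<Longrightarrow> 0 < F n"
  by (simp add: F_def fib_neq_0_nat)

lemma F_mono: "m \<le> n \<Longrightarrow> F m \<le> F n"
  by (simp add: F_def fib_mono)

lemma F_add: "F (m + n + 1) = F (m + 1) * F (n + 1) + F m * F n"
  unfolding F_def using fib_add[of n m] by (simp add: ac_simps)

lemma F_Cassini: "F (n + 2) * F n - (F (n + 1))\<^sup>2 = - ((-1) ^ n)"
  using fib_Cassini_int[of n] by (simp add: F_def)

lemma coprime_F_F_add_two: "coprime (F n) (F (n + 2))"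
proof -
  have "gcd n (n + 2) = gcd n 2"
    by (metis gcd_add2 gcd.commute add.commute)
  moreover have "gcd n 2 = 1 \<or> gcd n 2 = 2"
    using gcd_le2_nat[of 2 n] gcd_pos_nat[of n 2] by linarith
  ultimately have "gcd (fib n) (fib (n + 2)) = 1"
    using fib_gcd[of n "n + 2"] by (metis fib_1 fib_2 numeral_One)
  then have "coprime (fib n) (fib (n + 2))"
    by (simp only: coprime_iff_gcd_eq_1)
  then show ?thesis
    unfolding F_def by (simp only: coprime_int_iff)
qed

lemma F_add_eq_diff:
  assumes "2 \<le> k"
  shows "F (i + k) = F k * F (i + 2) - F (k - 2) * F i"
proof -
  obtain m where k: "k = m + 2" using assms le_Suc_ex by (metis add.commute)
  have "F (i + k) = F (m + 2) * F (i + 1) + F (m + 1) * F i"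
    using F_add[of "m + 1" i] by (simp add: k ac_simps)
  also have "\<dots> = F (m + 2) * F (i + 2) - F m * F i"
    using F_add_two[of i] F_add_two[of m] by (simp add: algebra_simps)
  finally show ?thesis by (simp add: k)
qed

lemma F_Suc_le_double: "1 \<le> n \<Longrightarrow> F (n + 1) \<le> 2 * F n"
  using F_add_two[of "n - 1"] F_mono[of "n - 1" n] by simp

lemma F_less_F_Suc: "2 \<le> n \<Longrightarrow> F n < F (n + 1)"
  using F_add_two[of "n - 1"] F_pos[of "n - 1"] by simp

lemma F_double_sub_two_le: "2 \<le> k \<Longrightarrow> 2 * F (k - 2) \<le> F k"
  using F_add_two[of "k - 2"] F_mono[of "k - 2" "k - 1"] by (simp add: numeral_eq_Suc Suc_diff_Suc)

lemma F_mult_F_sub_two_le: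
  assumes "1 \<le> k" "k \<le> i + 3"
  shows "F k * F (k - 2) \<le> F (i + k)"
proof -
  have "F (i + k) = F k * F (i + 1) + F (k - 1) * F i"
    using F_add[of "k - 1" i] assms(1) by (simp add: add.commute)
  moreover have "F k * F (k - 2) \<le> F k * F (i + 1)"
    using assms(2) by (intro mult_left_mono F_mono) auto
  moreover have "0 \<le> F (k - 1) * F i"
    by simp
  ultimately show ?thesis
    by linarith
qed

lemma F_Suc_eq: "1 \<le> i \<Longrightarrow> F (i + 1) = F i + F (i - 1)"
  using F_add_two[of "i - 1"] by simp

lemma F_add_two_eq: "1 \<le> i \<Longrightarrow> F (i + 2) = 2 * F i + F (i - 1)"
  using F_add_two[of i] F_Suc_eq[of i] by simp

lemma F_3_4_6_7: "F 3 = 2" "F 4 = 3" "F 6 = 8" "F 7 = 13"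
  by (simp_all add: F_def numeral_eq_Suc)

lemma cong_F_add:
  assumes "2 \<le> k"
  shows "[F (i + k) = F k * F (i + 2)] (mod F i)"
  by (rule cong_of_eq_add_mult[where j = "- F (k - 2)"]) (use F_add_eq_diff[OF assms, of i] in simp)

lemma F_neighbours:
  assumes "3 \<le> i"
  shows "1 \<le> F (i - 1)" "F (i - 1) < F i" "F (i + 1) = F i + F (i - 1)"
    "F (i + 2) = 2 * F i + F (i - 1)"
  using assms F_pos[of "i - 1"] F_less_F_Suc[of "i - 1"] F_Suc_eq[of i] F_add_two_eq[of i]
  by simp_all

lemma F_double_add_two:
  assumes "3 \<le> i"
  shows "F (2 * i + 2) + (-1) ^ i = (F i + 2 * F (i - 1)) * F (i + 2)"
proof -
  note F = F_neighbours[OF assms]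
  have "F (2 * i + 2) = F (i + 2) * F (i + 1) + F (i + 1) * F i"
    using F_add[of "i + 1" i] by (simp add: numeral_eq_Suc)
  moreover obtain m where m: "i = Suc m"
    using assms by (cases i) auto
  then have "F (i + 1) * F (i - 1) - (F i)\<^sup>2 = (-1) ^ i"
    using F_Cassini[of m] by (simp add: numeral_eq_Suc)
  ultimately show ?thesis
    unfolding F(3,4) by (simp add: power2_eq_square algebra_simps)
qed

lemma cong_F_double_add_two:
  assumes "3 \<le> i"
  shows "[F (2 * i + 2) = F (i - 1) * F (i + 2)] (mod F i)"
proof (rule cong_of_eq_add_mult[where j = "3 * F i + 2 * F (i - 1)"])
  note F = F_neighbours[OF assms]
  have "F (2 * i + 2) = F (i + 2) * F (i + 1) + F (i + 1) * F i"
    using F_add[of "i + 1" i] by (simp add: numeral_eq_Suc)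
  then show "F (2 * i + 2) = F (i - 1) * F (i + 2) + (3 * F i + 2 * F (i - 1)) * F i"
    unfolding F(3,4) by (simp add: algebra_simps)
qed

section \<open>Fibonacci triples\<close>

lemma p_frobenius_2_F_far:
  assumes i: "3 \<le> i" and k: "i + 3 \<le> k"
  shows "p_frobenius 2 [F i, F (i + 2), F (i + k)] = (3 * F i - 1) * F (i + 2) - F i"
proof (rule p_frobenius_2_large_third[OF _ _ coprime_F_F_add_two cong_F_add])
  define x where "x = F (i - 1)"
  define y where "y = F i"
  have x: "1 \<le> x" and y: "1 \<le> y" "y \<le> 2 * x"
    using i F_pos[of "i - 1"] F_pos[of i] F_Suc_le_double[of "i - 1"] by (simp_all add: x_def y_def)
  have F1: "F (i + 1) = y + x" and F2: "F (i + 2) = 2 * y + x"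
    using i F_Suc_eq[of i] F_add_two_eq[of i] by (simp_all add: x_def y_def)
  have "F (2 * i + 3) = F (i + 2) * F (i + 2) + F (i + 1) * F (i + 1)"
    using F_add[of "i + 1" "i + 1"] by (simp add: numeral_eq_Suc)
  then have "F (2 * i + 3) - ((3 * y - 1) * (2 * y + x) - y) = 2 * (x * x) + 3 * (x * y) - y * y + x + 3 * y"
    unfolding F1 F2 by (simp add: algebra_simps)
  moreover have "y * y \<le> 2 * (x * y)" "0 \<le> x * x" "0 \<le> x * y"
    using x y by (simp_all add: mult_right_mono algebra_simps)
  moreover have "F (2 * i + 3) \<le> F (i + k)"
    using k by (intro F_mono) simp
  ultimately show "(3 * F i - 1) * F (i + 2) - F i < F (i + k)"
    unfolding F2 y_def[symmetric] using x y by linarith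
qed (use i k F_pos[of i] F_pos[of "i + 2"] in simp_all)

lemma p_frobenius_2_F_double_add_two_odd:
  assumes i: "3 \<le> i" and "odd i"
  shows "p_frobenius 2 [F i, F (i + 2), F (2 * i + 2)] =
    (F (i - 2) - 1) * F (i + 2) + F (2 * i + 2) - F i"
proof -
  note F = F_neighbours[OF i]
  have "F (i - 2) = F i - F (i - 1)"
    using F_Suc_eq[of "i - 1"] i by (simp add: numeral_eq_Suc)
  moreover have "F (2 * i + 2) = (F i + 2 * F (i - 1)) * F (i + 2) + 1"
    using F_double_add_two[OF i] \<open>odd i\<close> by simp
  ultimately show ?thesis
    using p_frobenius_2_third_succ_mult[OF F(1,2) F(4) coprime_F_F_add_two cong_F_double_add_two[OF i]]
    by simp
qed

lemma p_frobenius_2_F_double_add_two_even: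
  assumes i: "3 \<le> i" and "even i"
  shows "p_frobenius 2 [F i, F (i + 2), F (2 * i + 2)] = (F (i + 2) - 1) * F (i + 2) - F i"
proof -
  note F = F_neighbours[OF i]
  have "F (2 * i + 2) + 1 = (F i + 2 * F (i - 1)) * F (i + 2)"
    using F_double_add_two[OF i] \<open>even i\<close> by simp
  then show ?thesis
    by (rule p_frobenius_2_third_pred_mult[OF F(1,2) F(4) coprime_F_F_add_two cong_F_double_add_two[OF i]])
qed

lemma p_frobenius_2_F_double_add_one:
  assumes i: "3 \<le> i"
  shows "p_frobenius 2 [F i, F (i + 2), F (2 * i + 1)] = (F i - 1) * F (i + 2) + F (2 * i + 1) - F i"
proof -
  note F = F_neighbours[OF i]
  define x where "x = F (i - 1)"
  define y where "y = F i"
  have xy: "1 \<le> x" "x < y"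
    using F by (simp_all add: x_def y_def)
  have "F (2 * i + 1) = F (i + 1) * F (i + 1) + F i * F i"
    using F_add[of i i] by (simp add: mult_2)
  then have c: "F (2 * i + 1) = x * x + 2 * (x * y) + 2 * (y * y)"
    unfolding F(3) by (simp add: x_def y_def algebra_simps)
  have pos: "1 * 1 \<le> x * y" "1 * 1 \<le> y * y"
    using xy by (intro mult_mono; simp)+
  have "0 \<le> x * x"
    by simp
  have "p_frobenius 2 [y, 2 * y + x, x * x + 2 * (x * y) + 2 * (y * y)] =
      (y - 1) * (2 * y + x) + (x * x + 2 * (x * y) + 2 * (y * y)) - y"
  proof (rule p_frobenius_2_mid_third[OF xy])
    show "coprime y (2 * y + x)"
      using coprime_F_F_add_two[of i] F(4) by (simp add: x_def y_def)
    show "[x * x + 2 * (x * y) + 2 * (y * y) = x * (2 * y + x)] (mod y)"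
      by (rule cong_of_eq_add_mult[where j = "2 * y"]) (simp add: algebra_simps)
  qed (use xy pos \<open>0 \<le> x * x\<close> in \<open>simp_all add: algebra_simps\<close>)
  then show ?thesis
    by (simp only: F(4) c x_def y_def)
qed

lemma p_frobenius_2_F_double:
  assumes i: "3 \<le> i"
  shows "p_frobenius 2 [F i, F (i + 2), F (2 * i)] = (2 * F i - 1) * F (i + 2) - F i"
proof -
  note F = F_neighbours[OF i]
  define x where "x = F (i - 1)"
  define y where "y = F i"
  have xy: "1 \<le> x" "x < y" "2 \<le> y"
    using F F_mono[OF i] F_3_4_6_7 by (simp_all add: x_def y_def)
  have "F (2 * i) = F (i + 1) * F i + F i * F (i - 1)"
    using F_add[of i "i - 1"] i by (simp add: mult_2)
  then have c: "F (2 * i) = y * (y + 2 * x)"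
    unfolding F(3) by (simp add: x_def y_def algebra_simps)
  have pos: "x * y \<le> y * y" "1 * 1 \<le> x * y" "1 * 1 \<le> y * y"
    using xy by (intro mult_mono; simp)+
  have "p_frobenius 2 [y, 2 * y + x, y * (y + 2 * x)] = (2 * y - 1) * (2 * y + x) - y"
  proof (rule p_frobenius_2_dvd_third[OF xy(3)])
    show "coprime y (2 * y + x)"
      using coprime_F_F_add_two[of i] F(4) by (simp add: x_def y_def)
  qed (use xy pos in \<open>simp_all add: algebra_simps\<close>)
  then show ?thesis
    by (simp only: F(4) c x_def y_def)
qed

lemma p_frobenius_2_F_double_sub_one:
  assumes i: "5 \<le> i"
  shows "p_frobenius 2 [F i, F (i + 2), F (2 * i - 1)] =
    (F (i - 4) - 1) * F (i + 2) + 3 * F (2 * i - 1) - F i"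
proof -
  define n where "n = i - 4"
  have n: "i = n + 4" "1 \<le> n"
    using i by (simp_all add: n_def)
  define G where "G k = F (n + k)" for k
  have G_rec: "G (k + 2) = G (k + 1) + G k" for k
    unfolding G_def using F_add_two[of "n + k"] by (simp add: add.assoc)
  define S where "S = G 0"
  define R where "R = G 1"
  have G3: "G 3 = 2 * R + S" and G4: "G 4 = 3 * R + 2 * S" and G6: "G 6 = 8 * R + 5 * S"
    using G_rec[of 0] G_rec[of 1] G_rec[of 2] G_rec[of 3] G_rec[of 4]
    by (simp_all add: R_def S_def numeral_eq_Suc)
  have S: "1 \<le> S" "S \<le> R" "R \<le> 2 * S"
    using n F_pos[of n] F_mono[of n "n + 1"] F_Suc_le_double[of n] by (simp_all add: S_def R_def G_def)
  have "2 * i - 1 = (n + 3) + (n + 3) + 1" "n + 3 + 1 = n + 4"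
    using n by simp_all
  then have "F (2 * i - 1) = G 4 * G 4 + G 3 * G 3"
    using F_add[of "n + 3" "n + 3"] unfolding G_def by (simp only:)
  then have c: "F (2 * i - 1) = (2 * R + S) * (8 * R + 5 * S) - R * (3 * R + 2 * S)"
    unfolding G3 G4 by (simp add: algebra_simps)
  have Fi: "F i = 3 * R + 2 * S" "F (i + 2) = 8 * R + 5 * S" "F (i - 4) = S"
    using G4 G6 n by (simp_all add: G_def S_def add.commute)
  have "coprime (3 * R + 2 * S) (8 * R + 5 * S)"
    using coprime_F_F_add_two[of i] Fi by simp
  from p_frobenius_2_RS[OF S refl refl refl c this] show ?thesis
    unfolding Fi .
qed

lemma p_frobenius_2_F_4_6_7: "p_frobenius 2 [F 4, F 6, F 7] = 31"
proof -
  have "p_frobenius 2 [3, 8, 13] = 34 - 3"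
  proof (rule p_frobenius_2_eqI[where e = 2 and t\<^sub>0 = 2 and P = "(2, 0)" and Q = "(0, 1)"])
    show "coprime (3 :: int) 8"
      using coprime_F_F_add_two[of 4] by (simp add: F_3_4_6_7)
    show "3 \<le> card (rep_pairs 3 8 13 2 t 34)" if "0 \<le> t" "t < 3" for t :: int
    proof -
      have "t = 0 \<or> t = 1 \<or> t = 2"
        using that by auto
      then show ?thesis
      proof (elim disjE)
        assume "t = 0"
        then show ?thesis
          by (intro three_le_card_rep_pairsI[of _ _ "(0, 0)" "(3, 0)" "(1, 1)"])
            (auto simp: cong_iff_dvd_diff)
      next
        assume "t = 1"
        then show ?thesis
          by (intro three_le_card_rep_pairsI[of _ _ "(1, 0)" "(0, 2)" "(4, 0)"])
            (auto simp: cong_iff_dvd_diff)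
      next
        assume "t = 2"
        then show ?thesis
          by (intro three_le_card_rep_pairsI[of _ _ "(2, 0)" "(0, 1)" "(1, 2)"])
            (auto simp: cong_iff_dvd_diff)
      qed
    qed
    show "(y, z) \<in> {(2, 0), (0, 1)}" if "(y, z) \<in> rep_pairs 3 8 13 2 2 (34 - 3)" for y z
    proof -
      have "z \<in> {0, 1, 2}" "y \<in> {0, 1, 2, 3}"
        using that by auto
      then show ?thesis
        using that by (auto simp: cong_iff_dvd_diff)
    qed
  qed (auto simp: cong_iff_dvd_diff)
  then show ?thesis
    by (simp add: F_3_4_6_7)
qed

lemma p_frobenius_2_F_near:
  assumes i: "3 \<le> i" and k: "3 \<le> k" and r: "r = (F i - 1) div F k" "2 \<le> r"
  shows "p_frobenius 2 [F i, F (i + 2), F (i + k)] =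
    (if F (k - 2) * F i \<le> (F i - r * F k) * F (i + 2)
     then (F i - r * F k - 1) * F (i + 2) + (r + 2) * F (i + k) - F i
     else (F k - 1) * F (i + 2) + (r + 1) * F (i + k) - F i)"
proof (rule p_frobenius_2_quot[OF _ _ F_double_sub_two_le r(2) _ _ _ _ F_add_eq_diff _ coprime_F_F_add_two])
  have f: "2 \<le> F k"
    using F_mono[OF k] by (simp add: F_3_4_6_7)
  then show "2 \<le> F k" .
  have "F i - 1 = F k * r + (F i - 1) mod F k" "0 \<le> (F i - 1) mod F k" "(F i - 1) mod F k < F k"
    using f by (simp_all add: r)
  then show s: "1 \<le> F i - r * F k" "F i - r * F k \<le> F k"
    by (simp_all add: algebra_simps)
  have "2 * F k \<le> r * F k"
    using r f by (intro mult_right_mono) auto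
  with s f have "F k < F i"
    by linarith
  then have "k \<le> i + 3"
    using F_mono[of i k] by fastforce
  then show "F k * F (k - 2) \<le> F (i + k)"
    using k by (intro F_mult_F_sub_two_le) auto
  show "5 * F i \<le> 2 * F (i + 2)"
    using F_neighbours[OF i] F_Suc_le_double[of "i - 1"] i by simp
qed (use k F_pos[of "k - 2"] in simp_all)

theorem theorem3:
  fixes i k :: nat
  assumes hi: "i \<ge> 3" and hk: "k \<ge> 3"
  shows
   "(k \<ge> i + 3 \<longrightarrow>
       p_frobenius 2 [F i, F (i+2), F (i+k)] = (3 * F i - 1) * F (i+2) - F i)
    \<and> (odd i \<longrightarrow>
       p_frobenius 2 [F i, F (i+2), F (2*i+2)] = (F (i-2) - 1) * F (i+2) + F (2*i+2) - F i)
    \<and> (even i \<longrightarrow>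
       p_frobenius 2 [F i, F (i+2), F (2*i+2)] = (F (i+2) - 1) * F (i+2) - F i)
    \<and> p_frobenius 2 [F i, F (i+2), F (2*i+1)] = (F i - 1) * F (i+2) + F (2*i+1) - F i
    \<and> p_frobenius 2 [F i, F (i+2), F (2*i)] = (2 * F i - 1) * F (i+2) - F i
    \<and> (i \<ge> 5 \<longrightarrow>
       p_frobenius 2 [F i, F (i+2), F (2*i-1)] = (F (i-4) - 1) * F (i+2) + 3 * F (2*i-1) - F i)
    \<and> p_frobenius 2 [F 4, F 6, F 7] = F 6 + 2 * F 7 - F 4
    \<and> p_frobenius 2 [F 4, F 6, F 7] = 31
    \<and> (let r = (F i - 1) div F k in
        r \<ge> 2 \<longrightarrow>
        p_frobenius 2 [F i, F (i+2), F (i+k)] =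
          (if (F i - r * F k) * F (i+2) \<ge> F (k-2) * F i
           then (F i - r * F k - 1) * F (i+2) + (r + 2) * F (i+k) - F i
           else (F k - 1) * F (i+2) + (r + 1) * F (i+k) - F i))"
  unfolding Let_def
  using p_frobenius_2_F_far[OF hi] p_frobenius_2_F_double_add_two_odd[OF hi]
    p_frobenius_2_F_double_add_two_even[OF hi] p_frobenius_2_F_double_add_one[OF hi]
    p_frobenius_2_F_double[OF hi] p_frobenius_2_F_double_sub_one p_frobenius_2_F_4_6_7
    p_frobenius_2_F_near[OF hi hk refl]
  by (simp add: F_3_4_6_7)

end
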